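(* Let $\Omega\subset\mathbb{R}$ be a bounded interval, let $g:\Omega\times\mathbb{R}^+\to\mathbb{R}$ be given, and for $\varepsilon>0$ let $(v,u)=(v_\varepsilon,u_\varepsilon)$ be a pair of smooth functions solving $$v_t-u_x=0,\qquad u_t-\tfrac{1}{\varepsilon^2}v_x=g(x,t)\qquad\text{on }\Omega\times\mathbb{R}^+,$$ with boundary condition $v(x,t)=0$ for all $(x,t)\in\partial\Omega\times\mathbb{R}^+$. Suppose $(v,u)$ admits a two-scale expansion $$v=v^{(0)}+\varepsilon v^{(1)}+\varepsilon^2v^{(2)}+O(\varepsilon^3),\qquad u=u^{(0)}+\varepsilon u^{(1)}+\varepsilon^2u^{(2)}+O(\varepsilon^3),$$ with smooth coefficient functions $v^{(k)},u^{(k)}$ independent of $\varepsilon$, in the sense that $\|v-v^{(0)}-\varepsilon v^{(1)}-\varepsilon^2v^{(2)}\|_{C^1}=O(\varepsilon^3)$ and $\|u-u^{(0)}-\varepsilon u^{(1)}-\varepsilon^2u^{(2)}\|_{C^1}=O(\varepsilon^3)$. Then necessarily $$v(x,t)=\varepsilon^2v^{(2)}(x,t)+O(\varepsilon^3),\qquad u(x,t)=u^{(0)}(t)+\varepsilon u^{(1)}(t)+\varepsilon^2u^{(2)}(x,t)+O(\varepsilon^3),$$ i.e. $v^{(0)}=v^{(1)}=0$ and $u^{(0)},u^{(1)}$ depend only on $t$.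
   Context: $\|\varphi\|_{C^1}:=\|\varphi\|_\infty+\|\nabla_{x,t}\varphi\|_\infty$ on $\Omega\times\mathbb{R}^+$; $O(\varepsilon^3)$ denotes a quantity bounded by a constant times $\varepsilon^3$ as $\varepsilon\to0$. *)

theory Defs
  imports "HOL-Analysis.Analysis"
begin

definition px :: "(real \<times> real \<Rightarrow> real) \<Rightarrow> real \<times> real \<Rightarrow> real" where
  "px f p = deriv (\<lambda>y. f (y, snd p)) (fst p)"

definition pt :: "(real \<times> real \<Rightarrow> real) \<Rightarrow> real \<times> real \<Rightarrow> real" where
  "pt f p = deriv (\<lambda>s. f (fst p, s)) (snd p)"

fun Ck_on :: "nat \<Rightarrow> (real \<times> real) set \<Rightarrow> (real \<times> real \<Rightarrow> real) \<Rightarrow> bool" where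
  "Ck_on 0 S f = continuous_on S f"
| "Ck_on (Suc n) S f = ((\<forall>p\<in>S. f differentiable (at p)) \<and> continuous_on S f \<and>
      Ck_on n S (px f) \<and> Ck_on n S (pt f))"

definition smooth_on :: "(real \<times> real) set \<Rightarrow> (real \<times> real \<Rightarrow> real) \<Rightarrow> bool" where
  "smooth_on S f = (\<forall>n. Ck_on n S f)"

definition grad_norm :: "(real \<times> real \<Rightarrow> real) \<Rightarrow> real \<times> real \<Rightarrow> real" where
  "grad_norm f p = sqrt ((px f p)\<^sup>2 + (pt f p)\<^sup>2)"

text \<open>For a family e indexed by \<epsilon>>0: the C^1 norm
  sup_S |e \<epsilon>| + sup_S |\<nabla> e \<epsilon>| is O(\<epsilon>^3) as \<epsilon> \<rightarrow> 0 (written out: both sups bounded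
  by C \<epsilon>^3 for all small \<epsilon>, which is equivalent up to the constant).\<close>
definition C1_O3 :: "(real \<times> real) set \<Rightarrow> (real \<Rightarrow> real \<times> real \<Rightarrow> real) \<Rightarrow> bool" where
  "C1_O3 S e = (\<exists>C \<epsilon>0. \<epsilon>0 > 0 \<and> (\<forall>\<epsilon>. 0 < \<epsilon> \<and> \<epsilon> < \<epsilon>0 \<longrightarrow>
      (\<forall>p\<in>S. \<bar>e \<epsilon> p\<bar> \<le> C * \<epsilon>^3 \<and> grad_norm (e \<epsilon>) p \<le> C * \<epsilon>^3)))"

end

theory Submission imports Defs begin

text \<open>The second equation reads v_x = \<epsilon>^2 (u_t - g), so the coefficients of 1 and \<epsilon> in
  the expansion of v_x vanish: if A + \<epsilon> B = O(\<epsilon>^2) as \<epsilon> \<rightarrow> 0, then A = B = 0.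
  Hence v0 and v1 are constant in x. The remainder bound is uniform in x, so by continuity it
  persists up to the boundary x = a, where v = 0; the same matching there gives v0 = v1 = 0.
  Then (v0)_t = (v1)_t = 0, and matching the two lowest orders in u_x = v_t gives
  (u0)_x = (u1)_x = 0.\<close>

lemma tendsto_0_if_O_power:
  fixes r :: "real \<Rightarrow> real"
  assumes bound: "\<forall>\<^sub>F e in at_right 0. \<bar>r e\<bar> \<le> C * e ^ n" and "k < n"
  shows "((\<lambda>e. r e / e ^ k) \<longlongrightarrow> 0) (at_right 0)"
proof (rule tendsto_0_le)
  show "((\<lambda>e. e ^ (n - k)) \<longlongrightarrow> 0) (at_right (0::real))"
    using \<open>k < n\<close> by (intro tendsto_eq_intros) (auto intro: tendsto_ident_at)
  show "\<forall>\<^sub>F e in at_right 0. norm (r e / e ^ k) \<le> norm (e ^ (n - k)) * C"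
    using bound eventually_at_right_less
  proof eventually_elim
    case (elim e)
    have "\<bar>r e\<bar> / e ^ k \<le> C * e ^ n / e ^ k"
      using elim by (intro divide_right_mono) auto
    also have "\<dots> = C * e ^ (n - k)"
      using elim \<open>k < n\<close> by (simp add: power_diff)
    finally show ?case using elim by (simp add: abs_divide mult.commute)
  qed
qed

lemma affine_eq_0_if_O_square:
  fixes A B L :: real and P :: "real \<Rightarrow> real"
  assumes eq: "\<forall>\<^sub>F e in at_right 0. A + e * B = e\<^sup>2 * P e"
    and lim: "(P \<longlongrightarrow> L) (at_right 0)"
  shows "A = 0 \<and> B = 0"
proof -
  have e_to_0: "((\<lambda>e. e) \<longlongrightarrow> (0::real)) (at_right 0)"
    by (rule tendsto_ident_at)
  have "((\<lambda>e. A + e * B) \<longlongrightarrow> A + 0 * B) (at_right 0)"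
    by (intro tendsto_intros e_to_0)
  moreover have "((\<lambda>e. A + e * B) \<longlongrightarrow> 0\<^sup>2 * L) (at_right 0)"
    using tendsto_cong[OF eq] by (simp only:) (intro tendsto_intros e_to_0 lim)
  ultimately have A: "A = 0"
    using tendsto_unique[OF trivial_limit_at_right_real] by fastforce
  have B_eq: "\<forall>\<^sub>F e in at_right 0. B = e * P e"
    using eq eventually_at_right_less
    by eventually_elim (simp add: A power2_eq_square)
  have "((\<lambda>e. B) \<longlongrightarrow> 0 * L) (at_right (0::real))"
    unfolding tendsto_cong[OF B_eq] by (intro tendsto_intros e_to_0 lim)
  then have "B = 0"
    by (simp add: tendsto_const_iff)
  with A show ?thesis ..
qed

lemma expansion_leading_terms_vanish:
  fixes f g :: "real \<Rightarrow> real"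
  assumes f_eq: "\<forall>\<^sub>F e in at_right 0. f e = e\<^sup>2 * g e"
    and f_exp: "\<forall>\<^sub>F e in at_right 0. \<bar>f e - f0 - e * f1 - e\<^sup>2 * f2\<bar> \<le> C * e ^ 3"
    and g_exp: "\<forall>\<^sub>F e in at_right 0. \<bar>g e - g0 - e * g1 - e\<^sup>2 * g2\<bar> \<le> D * e ^ 3"
  shows "f0 = 0 \<and> f1 = 0"
proof (rule affine_eq_0_if_O_square)
  define rf where "rf e = f e - f0 - e * f1 - e\<^sup>2 * f2" for e
  define rg where "rg e = g e - g0 - e * g1 - e\<^sup>2 * g2" for e
  show "\<forall>\<^sub>F e in at_right 0. f0 + e * f1 = e\<^sup>2 * (g0 + e * g1 + e\<^sup>2 * g2 + rg e - f2 - rf e / e\<^sup>2)"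
    using f_eq eventually_at_right_less
    by eventually_elim (simp add: rf_def rg_def field_simps)
  have "((\<lambda>e. rg e / e ^ 0) \<longlongrightarrow> 0) (at_right 0)"
    using g_exp unfolding rg_def by (rule tendsto_0_if_O_power) simp
  moreover have "((\<lambda>e. rf e / e\<^sup>2) \<longlongrightarrow> 0) (at_right 0)"
    using f_exp unfolding rf_def by (rule tendsto_0_if_O_power) simp
  ultimately show "((\<lambda>e. g0 + e * g1 + e\<^sup>2 * g2 + rg e - f2 - rf e / e\<^sup>2)
      \<longlongrightarrow> g0 + 0 * g1 + 0\<^sup>2 * g2 + 0 - f2 - 0) (at_right 0)"
    by (intro tendsto_intros tendsto_ident_at) simp_all
qed

lemma has_real_derivative_px:
  assumes "f differentiable (at p)"
  shows "((\<lambda>y. f (y, snd p)) has_real_derivative px f p) (at (fst p))"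
proof -
  have "(\<lambda>y. (y, snd p)) differentiable (at (fst p))"
    by (auto intro!: derivative_intros)
  with assms have "(\<lambda>y. f (y, snd p)) differentiable (at (fst p))"
    using differentiable_compose[of f "\<lambda>y. (y, snd p)"] by (simp add: o_def)
  then show ?thesis
    unfolding px_def using DERIV_deriv_iff_real_differentiable by blast
qed

lemma has_real_derivative_pt:
  assumes "f differentiable (at p)"
  shows "((\<lambda>s. f (fst p, s)) has_real_derivative pt f p) (at (snd p))"
proof -
  have "(\<lambda>s. (fst p, s)) differentiable (at (snd p))"
    by (auto intro!: derivative_intros)
  with assms have "(\<lambda>s. f (fst p, s)) differentiable (at (snd p))"
    using differentiable_compose[of f "\<lambda>s. (fst p, s)"] by (simp add: o_def)
  then show ?thesis
    unfolding pt_def using DERIV_deriv_iff_real_differentiable by blast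
qed

lemma px_expansion:
  assumes "f differentiable (at p)" "f0 differentiable (at p)"
    "f1 differentiable (at p)" "f2 differentiable (at p)"
  shows "px (\<lambda>q. f q - f0 q - c * f1 q - d * f2 q) p = px f p - px f0 p - c * px f1 p - d * px f2 p"
  unfolding px_def[of "\<lambda>q. f q - f0 q - c * f1 q - d * f2 q"]
  using assms[THEN has_real_derivative_px]
  by (intro DERIV_imp_deriv derivative_intros) (auto intro: DERIV_cmult)

lemma pt_expansion:
  assumes "f differentiable (at p)" "f0 differentiable (at p)"
    "f1 differentiable (at p)" "f2 differentiable (at p)"
  shows "pt (\<lambda>q. f q - f0 q - c * f1 q - d * f2 q) p = pt f p - pt f0 p - c * pt f1 p - d * pt f2 p"
  unfolding pt_def[of "\<lambda>q. f q - f0 q - c * f1 q - d * f2 q"]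
  using assms[THEN has_real_derivative_pt]
  by (intro DERIV_imp_deriv derivative_intros) (auto intro: DERIV_cmult)

lemma abs_px_le_grad_norm: "\<bar>px f p\<bar> \<le> grad_norm f p"
  unfolding grad_norm_def by (metis real_sqrt_abs real_sqrt_le_mono le_add_same_cancel1 zero_le_power2)

lemma abs_pt_le_grad_norm: "\<bar>pt f p\<bar> \<le> grad_norm f p"
  unfolding grad_norm_def by (metis real_sqrt_abs real_sqrt_le_mono le_add_same_cancel2 zero_le_power2)

lemma smooth_on_imp_differentiable: "smooth_on S f \<Longrightarrow> p \<in> S \<Longrightarrow> f differentiable (at p)"
  unfolding smooth_on_def by (metis Ck_on.simps(2))

lemma pt_eq_0_if_vanishing:
  assumes "open T" "snd p \<in> T" "\<And>s. s \<in> T \<Longrightarrow> f (fst p, s) = 0"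
  shows "pt f p = 0"
proof -
  have "((\<lambda>s. f (fst p, s)) has_real_derivative 0) (at (snd p))"
    using assms
    by (intro has_field_derivative_transform_within_open[OF DERIV_const[of 0], where S = T]) auto
  then show ?thesis unfolding pt_def by (rule DERIV_imp_deriv)
qed

lemma const_in_x_if_px_eq_0:
  fixes f :: "real \<times> real \<Rightarrow> real"
  assumes cont: "continuous_on ({a..b} \<times> T) f" and "t \<in> T"
    and px_0: "\<And>x. x \<in> {a<..<b} \<Longrightarrow> f differentiable (at (x, t)) \<and> px f (x, t) = 0"
    and "x \<in> {a..b}" "y \<in> {a..b}"
  shows "f (x, t) = f (y, t)"
proof (cases "a < b")
  case True
  have "continuous_on {a..b} (\<lambda>z. f (z, t))"
    using cont \<open>t \<in> T\<close> by (auto intro!: continuous_intros elim!: continuous_on_compose2)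
  moreover have "((\<lambda>z. f (z, t)) has_real_derivative 0) (at z)" if "a < z" "z < b" for z
    using px_0[of z] that has_real_derivative_px[of f "(z, t)"] by auto
  ultimately have "f (z, t) = f (a, t)" if "z \<in> {a..b}" for z
    using DERIV_isconst2[OF True] that by auto
  then show ?thesis using assms(4,5) by metis
next
  case False
  with assms(4,5) have "x = y" by simp
  then show ?thesis by simp
qed

lemma C1_O3_expansion_bounds:
  assumes exp: "C1_O3 S (\<lambda>e p. f e p - f0 p - e * f1 p - e\<^sup>2 * f2 p)"
    and diff: "\<And>e p. e > 0 \<Longrightarrow> p \<in> S \<Longrightarrow> f e differentiable (at p)"
    and diff_coeffs: "\<And>p. p \<in> S \<Longrightarrow>
      f0 differentiable (at p) \<and> f1 differentiable (at p) \<and> f2 differentiable (at p)"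
  obtains C where
    "\<forall>\<^sub>F e in at_right 0. \<forall>p\<in>S. \<bar>f e p - f0 p - e * f1 p - e\<^sup>2 * f2 p\<bar> \<le> C * e ^ 3"
    "\<forall>\<^sub>F e in at_right 0. \<forall>p\<in>S. \<bar>px (f e) p - px f0 p - e * px f1 p - e\<^sup>2 * px f2 p\<bar> \<le> C * e ^ 3"
    "\<forall>\<^sub>F e in at_right 0. \<forall>p\<in>S. \<bar>pt (f e) p - pt f0 p - e * pt f1 p - e\<^sup>2 * pt f2 p\<bar> \<le> C * e ^ 3"
proof -
  obtain C e0 where "e0 > 0" and bound: "\<And>e p. 0 < e \<Longrightarrow> e < e0 \<Longrightarrow> p \<in> S \<Longrightarrow>
      \<bar>f e p - f0 p - e * f1 p - e\<^sup>2 * f2 p\<bar> \<le> C * e ^ 3 \<and>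
      grad_norm (\<lambda>p. f e p - f0 p - e * f1 p - e\<^sup>2 * f2 p) p \<le> C * e ^ 3"
    using exp unfolding C1_O3_def by blast
  have "\<forall>\<^sub>F e in at_right 0. e \<in> {0<..<e0}"
    using eventually_at_right_real[OF \<open>e0 > 0\<close>] .
  then have H: "\<forall>\<^sub>F e in at_right 0. \<forall>p\<in>S.
      \<bar>f e p - f0 p - e * f1 p - e\<^sup>2 * f2 p\<bar> \<le> C * e ^ 3 \<and>
      \<bar>px (f e) p - px f0 p - e * px f1 p - e\<^sup>2 * px f2 p\<bar> \<le> C * e ^ 3 \<and>
      \<bar>pt (f e) p - pt f0 p - e * pt f1 p - e\<^sup>2 * pt f2 p\<bar> \<le> C * e ^ 3"
  proof eventually_elim
    case (elim e)
    show ?case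
    proof
      fix p assume "p \<in> S"
      note diffs = diff[of e p] diff_coeffs[OF \<open>p \<in> S\<close>]
      show "\<bar>f e p - f0 p - e * f1 p - e\<^sup>2 * f2 p\<bar> \<le> C * e ^ 3 \<and>
          \<bar>px (f e) p - px f0 p - e * px f1 p - e\<^sup>2 * px f2 p\<bar> \<le> C * e ^ 3 \<and>
          \<bar>pt (f e) p - pt f0 p - e * pt f1 p - e\<^sup>2 * pt f2 p\<bar> \<le> C * e ^ 3"
        using bound[of e p] elim \<open>p \<in> S\<close> diffs
          abs_px_le_grad_norm[of "\<lambda>p. f e p - f0 p - e * f1 p - e\<^sup>2 * f2 p" p]
          abs_pt_le_grad_norm[of "\<lambda>p. f e p - f0 p - e * f1 p - e\<^sup>2 * f2 p" p]
        by (simp add: px_expansion pt_expansion)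
    qed
  qed
  show ?thesis
    by (rule that) (use H in \<open>eventually_elim, blast\<close>)+
qed

lemma abs_le_on_closed_slice:
  fixes f :: "real \<times> real \<Rightarrow> real"
  assumes "continuous_on ({a..b} \<times> T) f" "a < b" "t \<in> T"
    and bound: "\<And>x. x \<in> {a<..<b} \<Longrightarrow> \<bar>f (x, t)\<bar> \<le> M"
    and "x \<in> {a..b}"
  shows "\<bar>f (x, t)\<bar> \<le> M"
proof -
  have "continuous_on {a..b} (\<lambda>y. f (y, t))"
    using assms(1,3) by (auto intro!: continuous_intros elim!: continuous_on_compose2)
  then have "norm (f (x, t)) \<le> M"
    using bound \<open>a < b\<close> \<open>x \<in> {a..b}\<close>
    by (intro continuous_on_closure_norm_le[of "{a<..<b}" "\<lambda>y. f (y, t)"]) auto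
  then show ?thesis by simp
qed

lemma leading_terms_vanish_at_endpoint:
  fixes f :: "real \<Rightarrow> real \<times> real \<Rightarrow> real"
  assumes "a < b" "t \<in> T" "x \<in> {a..b}"
    and zero: "\<And>e. e > 0 \<Longrightarrow> f e (x, t) = 0"
    and cont: "\<And>e. e > 0 \<Longrightarrow>
      continuous_on ({a..b} \<times> T) (\<lambda>q. f e q - f0 q - e * f1 q - e\<^sup>2 * f2 q)"
    and bound: "\<forall>\<^sub>F e in at_right 0. \<forall>y\<in>{a<..<b}.
      \<bar>f e (y, t) - f0 (y, t) - e * f1 (y, t) - e\<^sup>2 * f2 (y, t)\<bar> \<le> C * e ^ 3"
  shows "f0 (x, t) = 0 \<and> f1 (x, t) = 0"
proof (rule expansion_leading_terms_vanish[where g = "\<lambda>_. 0"])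
  show "\<forall>\<^sub>F e in at_right 0. f e (x, t) = e\<^sup>2 * 0"
    using eventually_at_right_less by eventually_elim (simp add: zero)
  show "\<forall>\<^sub>F e in at_right 0. \<bar>f e (x, t) - f0 (x, t) - e * f1 (x, t) - e\<^sup>2 * f2 (x, t)\<bar> \<le> C * e ^ 3"
    using bound eventually_at_right_less
  proof eventually_elim
    case (elim e)
    show ?case
      by (rule abs_le_on_closed_slice[OF cont \<open>a < b\<close>]) (use elim assms(2,3) in auto)
  qed
  show "\<forall>\<^sub>F e in at_right (0::real). \<bar>0 - 0 - e * 0 - e\<^sup>2 * 0\<bar> \<le> 0 * e ^ 3"
    by simp
qed

locale two_scale_expansion =
  fixes a b :: real
    and g :: "real \<times> real \<Rightarrow> real"
    and v u :: "real \<Rightarrow> real \<times> real \<Rightarrow> real"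
    and v0 v1 v2 u0 u1 u2 :: "real \<times> real \<Rightarrow> real"
  assumes ab: "a < b"
    and smooth_vu: "\<And>\<epsilon>. \<epsilon> > 0 \<Longrightarrow> smooth_on ({a<..<b} \<times> {0<..}) (v \<epsilon>) \<and>
                                     smooth_on ({a<..<b} \<times> {0<..}) (u \<epsilon>)"
    and cont_vu: "\<And>\<epsilon>. \<epsilon> > 0 \<Longrightarrow> continuous_on ({a..b} \<times> {0<..}) (v \<epsilon>) \<and>
                                   continuous_on ({a..b} \<times> {0<..}) (u \<epsilon>)"
    and eq1: "\<And>\<epsilon> p. \<epsilon> > 0 \<Longrightarrow> p \<in> {a<..<b} \<times> {0<..} \<Longrightarrow> pt (v \<epsilon>) p - px (u \<epsilon>) p = 0"
    and eq2: "\<And>\<epsilon> p. \<epsilon> > 0 \<Longrightarrow> p \<in> {a<..<b} \<times> {0<..} \<Longrightarrow>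
                 pt (u \<epsilon>) p - (1 / \<epsilon>\<^sup>2) * px (v \<epsilon>) p = g p"
    and bc: "\<And>\<epsilon> x t. \<epsilon> > 0 \<Longrightarrow> x \<in> {a, b} \<Longrightarrow> t > 0 \<Longrightarrow> v \<epsilon> (x, t) = 0"
    and smooth_coeffs: "\<forall>f\<in>{v0, v1, v2, u0, u1, u2}. smooth_on ({a<..<b} \<times> {0<..}) f
                              \<and> continuous_on ({a..b} \<times> {0<..}) f"
    and exp_v: "C1_O3 ({a<..<b} \<times> {0<..}) (\<lambda>\<epsilon> p. v \<epsilon> p - v0 p - \<epsilon> * v1 p - \<epsilon>\<^sup>2 * v2 p)"
    and exp_u: "C1_O3 ({a<..<b} \<times> {0<..}) (\<lambda>\<epsilon> p. u \<epsilon> p - u0 p - \<epsilon> * u1 p - \<epsilon>\<^sup>2 * u2 p)"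
begin

abbreviation \<Omega> :: "(real \<times> real) set" where
  "\<Omega> \<equiv> {a<..<b} \<times> {0<..}"

lemma coeff_differentiable:
  "f \<in> {v0, v1, v2, u0, u1, u2} \<Longrightarrow> p \<in> \<Omega> \<Longrightarrow> f differentiable (at p)"
  using smooth_coeffs smooth_on_imp_differentiable by blast

lemma solution_differentiable:
  "e > 0 \<Longrightarrow> p \<in> \<Omega> \<Longrightarrow> v e differentiable (at p) \<and> u e differentiable (at p)"
  using smooth_vu smooth_on_imp_differentiable by blast

lemma v_remainder_bounds:
  obtains C where
    "\<forall>\<^sub>F e in at_right 0. \<forall>p\<in>\<Omega>. \<bar>v e p - v0 p - e * v1 p - e\<^sup>2 * v2 p\<bar> \<le> C * e ^ 3"
    "\<forall>\<^sub>F e in at_right 0. \<forall>p\<in>\<Omega>. \<bar>px (v e) p - px v0 p - e * px v1 p - e\<^sup>2 * px v2 p\<bar> \<le> C * e ^ 3"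
    "\<forall>\<^sub>F e in at_right 0. \<forall>p\<in>\<Omega>. \<bar>pt (v e) p - pt v0 p - e * pt v1 p - e\<^sup>2 * pt v2 p\<bar> \<le> C * e ^ 3"
  by (rule C1_O3_expansion_bounds[OF exp_v])
     (use solution_differentiable coeff_differentiable in auto)

lemma u_remainder_bounds:
  obtains C where
    "\<forall>\<^sub>F e in at_right 0. \<forall>p\<in>\<Omega>. \<bar>u e p - u0 p - e * u1 p - e\<^sup>2 * u2 p\<bar> \<le> C * e ^ 3"
    "\<forall>\<^sub>F e in at_right 0. \<forall>p\<in>\<Omega>. \<bar>px (u e) p - px u0 p - e * px u1 p - e\<^sup>2 * px u2 p\<bar> \<le> C * e ^ 3"
    "\<forall>\<^sub>F e in at_right 0. \<forall>p\<in>\<Omega>. \<bar>pt (u e) p - pt u0 p - e * pt u1 p - e\<^sup>2 * pt u2 p\<bar> \<le> C * e ^ 3"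
  by (rule C1_O3_expansion_bounds[OF exp_u])
     (use solution_differentiable coeff_differentiable in auto)

lemma px_v0_v1_eq_0:
  assumes "p \<in> \<Omega>"
  shows "px v0 p = 0 \<and> px v1 p = 0"
proof -
  obtain Cv where Rv: "\<forall>\<^sub>F e in at_right 0. \<forall>p\<in>\<Omega>.
      \<bar>px (v e) p - px v0 p - e * px v1 p - e\<^sup>2 * px v2 p\<bar> \<le> Cv * e ^ 3"
    using v_remainder_bounds by blast
  obtain Cu where Ru: "\<forall>\<^sub>F e in at_right 0. \<forall>p\<in>\<Omega>.
      \<bar>pt (u e) p - pt u0 p - e * pt u1 p - e\<^sup>2 * pt u2 p\<bar> \<le> Cu * e ^ 3"
    using u_remainder_bounds by blast
  show ?thesis
  proof (rule expansion_leading_terms_vanish)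
    show "\<forall>\<^sub>F e in at_right 0. px (v e) p = e\<^sup>2 * (pt (u e) p - g p)"
      using eventually_at_right_less
      by eventually_elim (use eq2 assms in \<open>simp add: field_simps\<close>)
    show "\<forall>\<^sub>F e in at_right 0. \<bar>px (v e) p - px v0 p - e * px v1 p - e\<^sup>2 * px v2 p\<bar> \<le> Cv * e ^ 3"
      using Rv by eventually_elim (use assms in auto)
    show "\<forall>\<^sub>F e in at_right 0.
        \<bar>(pt (u e) p - g p) - (pt u0 p - g p) - e * pt u1 p - e\<^sup>2 * pt u2 p\<bar> \<le> Cu * e ^ 3"
      using Ru by eventually_elim (use assms in auto)
  qed
qed

lemma v0_v1_eq_0_at_left:
  assumes "t > 0"
  shows "v0 (a, t) = 0 \<and> v1 (a, t) = 0"
proof -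
  obtain Cv where Rv: "\<forall>\<^sub>F e in at_right 0. \<forall>p\<in>\<Omega>.
      \<bar>v e p - v0 p - e * v1 p - e\<^sup>2 * v2 p\<bar> \<le> Cv * e ^ 3"
    using v_remainder_bounds by blast
  show ?thesis
  proof (rule leading_terms_vanish_at_endpoint[of a b t "{0<..}"])
    show "continuous_on ({a..b} \<times> {0<..}) (\<lambda>q. v e q - v0 q - e * v1 q - e\<^sup>2 * v2 q)"
      if "e > 0" for e
      using cont_vu[OF that] smooth_coeffs by (intro continuous_intros) auto
    show "\<forall>\<^sub>F e in at_right 0. \<forall>x\<in>{a<..<b}.
        \<bar>v e (x, t) - v0 (x, t) - e * v1 (x, t) - e\<^sup>2 * v2 (x, t)\<bar> \<le> Cv * e ^ 3"
      using Rv by eventually_elim (use assms in auto)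
  qed (use ab bc assms in auto)
qed

lemma v0_v1_eq_0:
  assumes "p \<in> \<Omega>"
  shows "v0 p = 0 \<and> v1 p = 0"
proof -
  obtain x t where p: "p = (x, t)" "x \<in> {a<..<b}" "t > 0"
    using assms by auto
  have "v0 (x, t) = v0 (a, t) \<and> v1 (x, t) = v1 (a, t)"
    using smooth_coeffs p ab px_v0_v1_eq_0 coeff_differentiable
    by (intro conjI const_in_x_if_px_eq_0[where T = "{0<..}" and b = b]) auto
  then show ?thesis
    using v0_v1_eq_0_at_left[OF \<open>t > 0\<close>] p by simp
qed

lemma pt_v0_v1_eq_0: "p \<in> \<Omega> \<Longrightarrow> pt v0 p = 0 \<and> pt v1 p = 0"
  using v0_v1_eq_0 by (auto intro!: pt_eq_0_if_vanishing[where T = "{0<..}"])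

lemma px_u0_u1_eq_0:
  assumes "p \<in> \<Omega>"
  shows "px u0 p = 0 \<and> px u1 p = 0"
proof -
  obtain Cv where Rv: "\<forall>\<^sub>F e in at_right 0. \<forall>p\<in>\<Omega>.
      \<bar>pt (v e) p - pt v0 p - e * pt v1 p - e\<^sup>2 * pt v2 p\<bar> \<le> Cv * e ^ 3"
    using v_remainder_bounds by blast
  obtain Cu where Ru: "\<forall>\<^sub>F e in at_right 0. \<forall>p\<in>\<Omega>.
      \<bar>px (u e) p - px u0 p - e * px u1 p - e\<^sup>2 * px u2 p\<bar> \<le> Cu * e ^ 3"
    using u_remainder_bounds by blast
  have "px u0 p - pt v0 p = 0 \<and> px u1 p - pt v1 p = 0"
  proof (rule expansion_leading_terms_vanish[where g = "\<lambda>_. 0"])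
    show "\<forall>\<^sub>F e in at_right 0. px (u e) p - pt (v e) p = e\<^sup>2 * 0"
      using eventually_at_right_less by eventually_elim (use eq1 assms in simp)
    show "\<forall>\<^sub>F e in at_right 0. \<bar>(px (u e) p - pt (v e) p) - (px u0 p - pt v0 p)
        - e * (px u1 p - pt v1 p) - e\<^sup>2 * (px u2 p - pt v2 p)\<bar> \<le> (Cu + Cv) * e ^ 3"
      using Ru Rv
    proof eventually_elim
      case (elim e)
      then have "\<bar>(px (u e) p - px u0 p - e * px u1 p - e\<^sup>2 * px u2 p)
          - (pt (v e) p - pt v0 p - e * pt v1 p - e\<^sup>2 * pt v2 p)\<bar> \<le> Cu * e ^ 3 + Cv * e ^ 3"
        using assms by (intro order_trans[OF abs_triangle_ineq4 add_mono]) auto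
      then show ?case by (simp add: algebra_simps)
    qed
    show "\<forall>\<^sub>F e in at_right (0::real). \<bar>0 - 0 - e * 0 - e\<^sup>2 * 0\<bar> \<le> 0 * e ^ 3"
      by simp
  qed
  then show ?thesis
    using pt_v0_v1_eq_0[OF assms] by simp
qed

lemma u0_u1_const_in_x:
  assumes "x \<in> {a<..<b}" "y \<in> {a<..<b}" "t > 0"
  shows "u0 (x, t) = u0 (y, t) \<and> u1 (x, t) = u1 (y, t)"
  using assms smooth_coeffs px_u0_u1_eq_0 coeff_differentiable
  by (intro conjI const_in_x_if_px_eq_0[where T = "{0<..}" and a = a and b = b]) auto

end

theorem lemma1:
  fixes a b :: real
    and g :: "real \<times> real \<Rightarrow> real"
    and v u :: "real \<Rightarrow> real \<times> real \<Rightarrow> real"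
    and v0 v1 v2 u0 u1 u2 :: "real \<times> real \<Rightarrow> real"
  assumes ab: "a < b"
    and smooth_vu: "\<And>\<epsilon>. \<epsilon> > 0 \<Longrightarrow> smooth_on ({a<..<b} \<times> {0<..}) (v \<epsilon>) \<and>
                                     smooth_on ({a<..<b} \<times> {0<..}) (u \<epsilon>)"
    and cont_vu: "\<And>\<epsilon>. \<epsilon> > 0 \<Longrightarrow> continuous_on ({a..b} \<times> {0<..}) (v \<epsilon>) \<and>
                                   continuous_on ({a..b} \<times> {0<..}) (u \<epsilon>)"
    and eq1: "\<And>\<epsilon> p. \<epsilon> > 0 \<Longrightarrow> p \<in> {a<..<b} \<times> {0<..} \<Longrightarrow> pt (v \<epsilon>) p - px (u \<epsilon>) p = 0"
    and eq2: "\<And>\<epsilon> p. \<epsilon> > 0 \<Longrightarrow> p \<in> {a<..<b} \<times> {0<..} \<Longrightarrow>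
                 pt (u \<epsilon>) p - (1 / \<epsilon>\<^sup>2) * px (v \<epsilon>) p = g p"
    and bc: "\<And>\<epsilon> x t. \<epsilon> > 0 \<Longrightarrow> x \<in> {a, b} \<Longrightarrow> t > 0 \<Longrightarrow> v \<epsilon> (x, t) = 0"
    and smooth_coeffs: "\<forall>f\<in>{v0, v1, v2, u0, u1, u2}. smooth_on ({a<..<b} \<times> {0<..}) f
                              \<and> continuous_on ({a..b} \<times> {0<..}) f"
    and exp_v: "C1_O3 ({a<..<b} \<times> {0<..}) (\<lambda>\<epsilon> p. v \<epsilon> p - v0 p - \<epsilon> * v1 p - \<epsilon>\<^sup>2 * v2 p)"
    and exp_u: "C1_O3 ({a<..<b} \<times> {0<..}) (\<lambda>\<epsilon> p. u \<epsilon> p - u0 p - \<epsilon> * u1 p - \<epsilon>\<^sup>2 * u2 p)"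
  shows "(\<forall>p\<in>{a<..<b} \<times> {0<..}. v0 p = 0 \<and> v1 p = 0) \<and>
         (\<forall>x\<in>{a<..<b}. \<forall>y\<in>{a<..<b}. \<forall>t>0. u0 (x, t) = u0 (y, t) \<and> u1 (x, t) = u1 (y, t))"
proof -
  interpret two_scale_expansion a b g v u v0 v1 v2 u0 u1 u2
    by unfold_locales (fact assms)+
  show ?thesis
    using v0_v1_eq_0 u0_u1_const_in_x by blast
qed

end
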